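(* Let $g,k,r\geq 0$ be integers. Every $r$-shallow topological minor of a $(g,k)$-gap-cover-planar graph is $(g,(2r+1)k)$-gap-cover-planar.
   Context: All graphs are simple, finite and undirected. A surface obtained from the sphere by adding $c$ cross-caps and $h$ handles has Euler genus $c+2h$. A drawing of a graph $G$ in a surface represents each vertex by a distinct point and each edge $vw$ by a non-self-intersecting curve between the points of $v$ and $w$, such that no three edges cross at a single point. Two distinct edges are independent if they share no endpoint. For a drawing $D$ of $G$, let $D^\times$ be the set of unordered pairs $\{e,f\}$ of independent edges that cross in $D$. A bearing of $D$ is a set $B$ of ordered pairs $(e,f)$ with $\{e,f\}\in D^\times$ such that for each $\{e,f\}\in D^\times$ at least one of $(e,f),(f,e)$ lies in $B$. For a bearing $B$, a $B$-cover of an edge $e$ is a set $C\subseteq V(G)$ such that every edge $f$ with $(e,f)\in B$ has an endpoint in $C$. A drawing $D$ is $k$-gap-cover-planar if there is a bearing $B$ of $D$ such that each edge $vw\in E(G)$ has a $B$-cover contained in $V(G)\setminus\{v,w\}$ of size at most $k$. A graph is $(g,k)$-gap-cover-planar if it has a $k$-gap-cover-planar drawing in a surface of Euler genus at most $g$. A $(\leq c)$-subdivision of $H$ replaces each edge of $H$ by a path with at most $c$ new internal vertices; $H$ is an $r$-shallow topological minor of $G$ if some $(\leq 2r)$-subdivision of $H$ is a subgraph of $G$. *)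

theory Defs
  imports "HOL-Analysis.Analysis"
begin

definition simple_graph :: "'a set \<Rightarrow> 'a set set \<Rightarrow> bool" where
  "simple_graph V E \<longleftrightarrow> finite V \<and> (\<forall>e\<in>E. \<exists>v w. v \<noteq> w \<and> e = {v, w} \<and> v \<in> V \<and> w \<in> V)"

definition independent_edges :: "'a set \<Rightarrow> 'a set \<Rightarrow> bool" where
  "independent_edges e f \<longleftrightarrow> e \<inter> f = {}"

text \<open>Standard polygon model of the sphere with c cross-caps and h handles.
  A word is a list of letters (label, orientation).  Sphere: a a^-1;
  otherwise a1 b1 a1^-1 b1^-1 ... ah bh ah^-1 bh^-1 c1 c1 ... cc cc.\<close>
definition surface_word :: "nat \<Rightarrow> nat \<Rightarrow> (nat \<times> bool) list" where
  "surface_word c h =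
    (if c = 0 \<and> h = 0 then [(0, True), (0, False)]
     else concat (map (\<lambda>i. [(4*i, True), (4*i+1, True), (4*i, False), (4*i+1, False)]) [0..<h])
          @ concat (map (\<lambda>j. [(4*h + j, True), (4*h + j, True)]) [0..<c]))"

text \<open>The boundary of the closed unit disk is split into n = length w arcs; the point
  of arc j at letter-parameter s (running along the letter's orientation).\<close>
definition arc_point :: "(nat \<times> bool) list \<Rightarrow> nat \<Rightarrow> real \<Rightarrow> complex" where
  "arc_point w j s =
    cis (2 * pi * (real j + (if snd (w ! j) then s else 1 - s)) / real (length w))"

definition polygon_gluing :: "(nat \<times> bool) list \<Rightarrow> (complex \<times> complex) set" where
  "polygon_gluing w =
    {(arc_point w j s, arc_point w j' s) | j j' s.
        j < length w \<and> j' < length w \<and> fst (w ! j) = fst (w ! j') \<and> 0 \<le> s \<and> s \<le> 1}"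

definition polygon_equiv :: "(nat \<times> bool) list \<Rightarrow> (complex \<times> complex) set" where
  "polygon_equiv w = (polygon_gluing w \<union> (polygon_gluing w)\<inverse>)\<^sup>*"

definition quotient_top :: "'p topology \<Rightarrow> ('p \<times> 'p) set \<Rightarrow> 'p set topology" where
  "quotient_top X R =
     topology (\<lambda>U. U \<subseteq> topspace X // R \<and> openin X (\<Union>U))"

definition surface :: "nat \<Rightarrow> nat \<Rightarrow> complex set topology" where
  "surface c h = quotient_top (top_of_set (cball 0 1)) (polygon_equiv (surface_word c h))"

definition drawing :: "'p topology \<Rightarrow> 'a set \<Rightarrow> 'a set set \<Rightarrow> ('a \<Rightarrow> 'p) \<Rightarrow> ('a set \<Rightarrow> real \<Rightarrow> 'p) \<Rightarrow> bool" where
  "drawing S V E pv ce \<longleftrightarrow>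
     pv ` V \<subseteq> topspace S \<and> inj_on pv V \<and>
     (\<forall>e\<in>E. continuous_map (top_of_set {0..1}) S (ce e) \<and> inj_on (ce e) {0..1} \<and>
        (\<exists>v w. e = {v, w} \<and> ce e 0 = pv v \<and> ce e 1 = pv w)) \<and>
     (\<forall>e\<in>E. \<forall>t\<in>{0<..<1}. ce e t \<notin> pv ` V) \<and>
     (\<forall>p. \<not> (\<exists>e1\<in>E. \<exists>e2\<in>E. \<exists>e3\<in>E. e1 \<noteq> e2 \<and> e1 \<noteq> e3 \<and> e2 \<noteq> e3 \<and>
            p \<in> ce e1 ` {0<..<1} \<and> p \<in> ce e2 ` {0<..<1} \<and> p \<in> ce e3 ` {0<..<1}))"

definition crossing_pairs :: "'a set set \<Rightarrow> ('a set \<Rightarrow> real \<Rightarrow> 'p) \<Rightarrow> 'a set set set" where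
  "crossing_pairs E ce =
     {{e, f} | e f. e \<in> E \<and> f \<in> E \<and> independent_edges e f \<and>
                    ce e ` {0..1} \<inter> ce f ` {0..1} \<noteq> {}}"

definition bearing :: "'a set set \<Rightarrow> ('a set \<Rightarrow> real \<Rightarrow> 'p) \<Rightarrow> ('a set \<times> 'a set) set \<Rightarrow> bool" where
  "bearing E ce B \<longleftrightarrow>
     (\<forall>(e, f)\<in>B. {e, f} \<in> crossing_pairs E ce) \<and>
     (\<forall>e f. {e, f} \<in> crossing_pairs E ce \<longrightarrow> (e, f) \<in> B \<or> (f, e) \<in> B)"

definition B_cover :: "('a set \<times> 'a set) set \<Rightarrow> 'a set \<Rightarrow> 'a set \<Rightarrow> bool" where
  "B_cover B e C \<longleftrightarrow> (\<forall>f. (e, f) \<in> B \<longrightarrow> f \<inter> C \<noteq> {})"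

definition gap_cover_drawing :: "nat \<Rightarrow> 'a set \<Rightarrow> 'a set set \<Rightarrow> ('a set \<Rightarrow> real \<Rightarrow> 'p) \<Rightarrow> bool" where
  "gap_cover_drawing k V E ce \<longleftrightarrow>
     (\<exists>B. bearing E ce B \<and>
        (\<forall>e\<in>E. \<exists>C. C \<subseteq> V - e \<and> card C \<le> k \<and> B_cover B e C))"

definition gap_cover_planar :: "nat \<Rightarrow> nat \<Rightarrow> 'a set \<Rightarrow> 'a set set \<Rightarrow> bool" where
  "gap_cover_planar g k V E \<longleftrightarrow>
     (\<exists>c h pv ce. c + 2 * h \<le> g \<and> drawing (surface c h) V E pv ce \<and> gap_cover_drawing k V E ce)"

text \<open>H is an r-shallow topological minor of G: some (<= 2r)-subdivision of H is a subgraph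
  of G, i.e. branch vertices phi and, for every edge {x,y} of H, a path P from phi x to phi y
  in G with at most 2r internal vertices, internally disjoint and avoiding branch vertices.\<close>
definition is_path :: "'a set set \<Rightarrow> 'a list \<Rightarrow> bool" where
  "is_path E P \<longleftrightarrow> P \<noteq> [] \<and> distinct P \<and> (\<forall>i. Suc i < length P \<longrightarrow> {P ! i, P ! Suc i} \<in> E)"

definition internal :: "'a list \<Rightarrow> 'a set" where
  "internal P = set (butlast (tl P))"

definition shallow_top_minor :: "nat \<Rightarrow> 'b set \<Rightarrow> 'b set set \<Rightarrow> 'a set \<Rightarrow> 'a set set \<Rightarrow> bool" where
  "shallow_top_minor r VH EH VG EG \<longleftrightarrow>
     (\<exists>(\<phi> :: 'b \<Rightarrow> 'a) (P :: 'b set \<Rightarrow> 'a list).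
        inj_on \<phi> VH \<and> \<phi> ` VH \<subseteq> VG \<and>
        (\<forall>e\<in>EH. is_path EG (P e) \<and> length (P e) \<le> 2 * r + 2 \<and>
            (\<exists>x y. e = {x, y} \<and> hd (P e) = \<phi> x \<and> last (P e) = \<phi> y) \<and>
            internal (P e) \<inter> \<phi> ` VH = {}) \<and>
        (\<forall>e\<in>EH. \<forall>f\<in>EH. e \<noteq> f \<longrightarrow> internal (P e) \<inter> internal (P f) = {}))"

end

theory Submission
  imports Defs
begin

text \<open>Let the branch vertices and the paths \<open>P e\<close> exhibit a \<open>(\<le> 2r)\<close>-subdivision of \<open>H\<close>
  in \<open>G\<close>, and fix a \<open>k\<close>-gap-cover-planar drawing of \<open>G\<close> on a surface.  Every surface is
  Hausdorff, so the union of the curves of the edges of \<open>P e\<close> contains an arc between the images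
  of the ends of \<open>e\<close>; this arc is the curve of \<open>e\<close>.  Distinct paths share neither edges nor
  internal vertices, hence these arcs form a drawing of \<open>H\<close>, and a crossing of independent edges
  \<open>e\<close>, \<open>f\<close> of \<open>H\<close> comes from a crossing of an edge \<open>a\<close> of \<open>P e\<close> with an edge \<open>b\<close> of \<open>P f\<close>.
  Bearing \<open>(e, f)\<close> like \<open>(a, b)\<close>, the covers of the at most \<open>2r + 1\<close> edges of \<open>P e\<close> hit every
  path \<open>P f\<close> borne by \<open>e\<close>; charging each hit vertex of \<open>P f\<close> to an end of \<open>f\<close> gives a cover of
  \<open>e\<close> by at most \<open>(2r + 1) k\<close> vertices outside \<open>e\<close>.\<close>

section \<open>Quotient topologies\<close>

lemma openin_quotient_top:
  assumes "equiv (topspace X) R"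
  shows "openin (quotient_top X R) U \<longleftrightarrow> U \<subseteq> topspace X // R \<and> openin X (\<Union>U)"
proof -
  have "istopology (\<lambda>U. U \<subseteq> topspace X // R \<and> openin X (\<Union>U))"
    unfolding istopology_def
  proof (rule conjI; intro allI impI)
    fix S T assume S: "S \<subseteq> topspace X // R \<and> openin X (\<Union>S)"
      and T: "T \<subseteq> topspace X // R \<and> openin X (\<Union>T)"
    have "\<Union>(S \<inter> T) = \<Union>S \<inter> \<Union>T"
      using S T quotient_disj[OF assms] by blast
    then show "S \<inter> T \<subseteq> topspace X // R \<and> openin X (\<Union>(S \<inter> T))"
      using S T by auto
  next
    fix K assume "\<forall>S\<in>K. S \<subseteq> topspace X // R \<and> openin X (\<Union>S)"
    moreover have "\<Union>(\<Union>K) = \<Union>(Union ` K)" by auto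
    ultimately show "\<Union>K \<subseteq> topspace X // R \<and> openin X (\<Union>(\<Union>K))" by auto
  qed
  then show ?thesis
    unfolding quotient_top_def by simp
qed

lemma topspace_quotient_top:
  assumes "equiv (topspace X) R"
  shows "topspace (quotient_top X R) = topspace X // R"
proof
  show "topspace (quotient_top X R) \<subseteq> topspace X // R"
    using openin_quotient_top[OF assms] openin_topspace by blast
  have "openin (quotient_top X R) (topspace X // R)"
    using openin_quotient_top[OF assms] Union_quotient[OF assms] by simp
  then show "topspace X // R \<subseteq> topspace (quotient_top X R)"
    by (rule openin_subset)
qed

lemma closedin_quotient_top:
  assumes "equiv (topspace X) R"
  shows "closedin (quotient_top X R) A \<longleftrightarrow> A \<subseteq> topspace X // R \<and> closedin X (\<Union>A)"
proof (cases "A \<subseteq> topspace X // R")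
  case True
  have "\<Union>(topspace X // R - A) = topspace X - \<Union>A"
    using True Union_quotient[OF assms] quotient_disj[OF assms] by blast
  moreover have "\<Union>A \<subseteq> topspace X"
    using True Union_quotient[OF assms] by blast
  ultimately show ?thesis
    using True by (simp add: closedin_def openin_quotient_top[OF assms] topspace_quotient_top[OF assms])
next
  case False
  then have "\<not> closedin (quotient_top X R) A"
    using closedin_subset[of "quotient_top X R" A] topspace_quotient_top[OF assms] by blast
  with False show ?thesis
    by blast
qed

lemma quotient_Int_Times:
  assumes "R `` A \<subseteq> A"
  shows "A // (R \<inter> A \<times> A) = A // R"
proof -
  have "(R \<inter> A \<times> A) `` {x} = R `` {x}" if "x \<in> A" for x
    using assms that by auto
  then show ?thesis
    unfolding quotient_def by auto
qed

lemma closed_Image_compact: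
  fixes R :: "('a::t2_space \<times> 'b::t2_space) set"
  assumes "compact R" "closed S"
  shows "closed (R `` S)"
proof -
  have "R `` S = snd ` (R \<inter> S \<times> UNIV)"
    by force
  moreover have "compact (R \<inter> S \<times> UNIV)"
    using assms by (intro compact_Int_closed closed_Times) auto
  then have "compact (snd ` (R \<inter> S \<times> UNIV))"
    by (intro compact_continuous_image continuous_intros)
  ultimately show ?thesis
    by (simp add: compact_imp_closed)
qed

text \<open>The projection onto the classes is a continuous closed surjection from a compact
  Hausdorff (hence normal) space, so the quotient is normal; its points are closed classes.\<close>
theorem Hausdorff_space_quotient_top:
  fixes K :: "'a::metric_space set"
  assumes "compact K" "equiv K R" "compact R"
  shows "Hausdorff_space (quotient_top (top_of_set K) R)"
proof -
  let ?Q = "quotient_top (top_of_set K) R"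
  define \<pi> where "\<pi> x = R `` {x}" for x
  have eq: "equiv (topspace (top_of_set K)) R"
    using assms(2) by simp
  have top: "topspace ?Q = K // R"
    using topspace_quotient_top[OF eq] by simp
  have closedQ: "closedin ?Q A \<longleftrightarrow> A \<subseteq> K // R \<and> closed (\<Union>A)" for A
    using closedin_quotient_top[OF eq] Union_quotient[OF assms(2)] compact_imp_closed[OF assms(1)]
    by (auto simp: closedin_closed_eq)
  have K: "\<pi> ` K = K // R"
    unfolding \<pi>_def quotient_def by blast
  have preimage: "{x \<in> K. \<pi> x \<in> A} = \<Union>A" if A: "A \<subseteq> K // R" for A
  proof
    show "{x \<in> K. \<pi> x \<in> A} \<subseteq> \<Union>A"
      unfolding \<pi>_def using equiv_class_self[OF assms(2)] by blast
    show "\<Union>A \<subseteq> {x \<in> K. \<pi> x \<in> A}"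
    proof
      fix x assume "x \<in> \<Union>A"
      then obtain a where "a \<in> K" "R `` {a} \<in> A" "(a, x) \<in> R"
        using A unfolding quotient_def by blast
      moreover from this have "x \<in> K" "R `` {a} = R `` {x}"
        using equiv_type[OF assms(2)] equiv_class_eq[OF assms(2)] by blast+
      ultimately show "x \<in> {x \<in> K. \<pi> x \<in> A}"
        unfolding \<pi>_def by simp
    qed
  qed
  have cont: "continuous_map (top_of_set K) ?Q \<pi>"
    unfolding continuous_map_closedin
  proof (intro conjI allI impI Pi_I)
    fix x assume "x \<in> topspace (top_of_set K)"
    then show "\<pi> x \<in> topspace ?Q"
      using K top by auto
  next
    fix C assume "closedin ?Q C"
    then have "C \<subseteq> K // R" "closed (\<Union>C)"
      using closedQ by auto
    moreover have "\<Union>C \<subseteq> K"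
      using \<open>C \<subseteq> K // R\<close> Union_quotient[OF assms(2)] by blast
    ultimately show "closedin (top_of_set K) {x \<in> topspace (top_of_set K). \<pi> x \<in> C}"
      using preimage closedin_closed_eq[OF compact_imp_closed[OF assms(1)]] by simp
  qed
  have closed: "closed_map (top_of_set K) ?Q \<pi>"
    unfolding closed_map_def
  proof (intro allI impI)
    fix S assume "closedin (top_of_set K) S"
    then have "closed S" "S \<subseteq> K"
      using closedin_closed_eq compact_imp_closed[OF assms(1)] by blast+
    moreover have "\<Union>(\<pi> ` S) = R `` S"
      unfolding \<pi>_def by auto
    moreover have "\<pi> ` S \<subseteq> K // R"
      using \<open>S \<subseteq> K\<close> K by blast
    ultimately show "closedin ?Q (\<pi> ` S)"
      using closedQ closed_Image_compact[OF assms(3)] by simp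
  qed
  have "compact_space (top_of_set K)"
    using assms(1) by (simp add: compact_space_subtopology)
  then have "normal_space (top_of_set K)"
    by (simp add: compact_Hausdorff_or_regular_imp_normal_space Hausdorff_space_subtopology)
  then have "normal_space ?Q"
    by (rule normal_space_continuous_closed_map_image[OF _ cont closed]) (simp add: K top)
  moreover have "t1_space ?Q"
    unfolding t1_space_closedin_singleton top
  proof
    fix C assume "C \<in> K // R"
    then obtain a where "C = R `` {a}"
      unfolding quotient_def by blast
    then have "closed C"
      using closed_Image_compact[OF assms(3) closed_singleton] by simp
    then show "closedin ?Q {C}"
      using closedQ[of "{C}"] \<open>C \<in> K // R\<close> by simp
  qed
  ultimately show ?thesis
    by (rule normal_t1_imp_Hausdorff_space)
qed

section \<open>The surfaces are Hausdorff\<close>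

definition circle_point :: "nat \<Rightarrow> real \<Rightarrow> complex" where
  "circle_point n u = cis (2 * pi * u / real n)"

text \<open>The gluing only identifies boundary points with equal parameters up to the flip
  \<open>s \<mapsto> 1 - s\<close>, so every class of \<^const>\<open>polygon_equiv\<close> lies in one of these finite sets.\<close>
definition level_points :: "nat \<Rightarrow> real \<Rightarrow> complex set" where
  "level_points n s =
     (\<lambda>j. circle_point n (real j + s)) ` {..<n} \<union> (\<lambda>j. circle_point n (real j + (1 - s))) ` {..<n}"

lemma arc_point_eq_circle_point:
  "arc_point w j s = circle_point (length w) (real j + (if snd (w ! j) then s else 1 - s))"
  unfolding arc_point_def circle_point_def by simp

lemma circle_point_eq_imp:
  assumes "n > 0" and eq: "circle_point n (real a + x) = circle_point n (real b + y)"
    and "x \<in> {0..1}" "y \<in> {0..1}"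
  shows "x = y \<or> (x \<in> {0, 1} \<and> y \<in> {0, 1})"
proof -
  obtain m :: int where "2 * pi * (real a + x) / real n = 2 * pi * (real b + y) / real n + 2 * pi * m"
    using eq sin_cos_eq_iff unfolding circle_point_def by (metis cis.sel)
  then have "pi * (2 * (real a + x)) = pi * (2 * (real b + y + m * real n))"
    using \<open>n > 0\<close> by (simp add: field_simps)
  moreover define k where "k = int b - int a + m * int n"
  ultimately have k: "x - y = of_int k"
    by simp
  moreover have "\<bar>x - y\<bar> \<le> 1"
    using assms(3,4) by auto
  ultimately have "\<bar>k\<bar> \<le> 1"
    by (metis of_int_abs of_int_le_1_iff)
  then have "k \<in> {-1, 0, 1}"
    by auto
  then have "x - y \<in> {-1, 0, 1}"
    using k by auto
  then show ?thesis
    using assms(3,4) by auto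
qed

lemma level_points_flip: "level_points n (1 - s) = level_points n s"
  unfolding level_points_def by auto

lemma level_points_eq:
  assumes "n > 0" "s \<in> {0..1}" "t \<in> {0..1}" "y \<in> level_points n s" "y \<in> level_points n t"
  shows "level_points n s = level_points n t"
proof -
  obtain a x where a: "y = circle_point n (real a + x)" "x = s \<or> x = 1 - s"
    using assms(4) unfolding level_points_def by auto
  obtain b z where b: "y = circle_point n (real b + z)" "z = t \<or> z = 1 - t"
    using assms(5) unfolding level_points_def by auto
  have "x \<in> {0..1}" "z \<in> {0..1}"
    using a(2) b(2) assms(2,3) by auto
  then have "x = z \<or> (x \<in> {0, 1} \<and> z \<in> {0, 1})"
    using circle_point_eq_imp[OF \<open>n > 0\<close>] a(1) b(1) by metis
  then have "s = t \<or> s = 1 - t"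
    using a(2) b(2) by auto
  then show ?thesis
    using level_points_flip by metis
qed

lemma polygon_gluing_level_points:
  assumes "(y, z) \<in> polygon_gluing w"
  obtains s where "s \<in> {0..1}" "y \<in> level_points (length w) s" "z \<in> level_points (length w) s"
  using assms unfolding polygon_gluing_def level_points_def arc_point_eq_circle_point
  by (fastforce split: if_splits)

lemma polygon_equiv_level_points:
  assumes "(x, y) \<in> polygon_equiv w" "y \<noteq> x"
  obtains s where "s \<in> {0..1}" "x \<in> level_points (length w) s" "y \<in> level_points (length w) s"
proof -
  have "y = x \<or> (\<exists>s\<in>{0..1}. x \<in> level_points (length w) s \<and> y \<in> level_points (length w) s)"
    using assms(1) unfolding polygon_equiv_def
  proof (induction rule: rtrancl_induct)
    case (step y z)
    obtain s where s: "s \<in> {0..1}" "y \<in> level_points (length w) s" "z \<in> level_points (length w) s"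
      using step(2) polygon_gluing_level_points by blast
    have "length w > 0"
      using s(2) unfolding level_points_def by auto
    with step(3) s show ?case
      using level_points_eq by blast
  qed simp
  with assms(2) that show ?thesis
    by blast
qed

lemma card_level_points: "card (level_points n s) \<le> 2 * n"
proof -
  have "card (level_points n s) \<le> card ((\<lambda>j. circle_point n (real j + s)) ` {..<n})
      + card ((\<lambda>j. circle_point n (real j + (1 - s))) ` {..<n})"
    unfolding level_points_def by (rule card_Un_le)
  also have "\<dots> \<le> n + n"
    by (intro add_mono) (metis card_image_le card_lessThan finite_lessThan)+
  finally show ?thesis
    by simp
qed

lemma polygon_equiv_class_finite:
  "finite (polygon_equiv w `` {x}) \<and> card (polygon_equiv w `` {x}) \<le> 2 * length w + 1"
proof (cases "polygon_equiv w `` {x} \<subseteq> {x}")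
  case True
  then show ?thesis
    using card_mono[OF _ True] finite_subset[OF True] by auto
next
  case False
  then obtain y s where "s \<in> {0..1}" "x \<in> level_points (length w) s"
    using polygon_equiv_level_points by blast
  note s = this
  have "length w > 0"
    using s(2) unfolding level_points_def by auto
  have sub: "polygon_equiv w `` {x} \<subseteq> insert x (level_points (length w) s)"
  proof
    fix y assume "y \<in> polygon_equiv w `` {x}"
    moreover have "y \<in> level_points (length w) s"
      if "(x, y) \<in> polygon_equiv w" "y \<noteq> x"
      using polygon_equiv_level_points[OF that] level_points_eq[OF \<open>length w > 0\<close> s(1)] s(2)
      by blast
    ultimately show "y \<in> insert x (level_points (length w) s)"
      by blast
  qed
  have fin: "finite (insert x (level_points (length w) s))"
    unfolding level_points_def by simp
  have "card (insert x (level_points (length w) s)) \<le> 2 * length w + 1"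
    using card_level_points[of "length w" s] fin by (simp add: card_insert_if)
  then show ?thesis
    using card_mono[OF fin sub] finite_subset[OF sub fin] by linarith
qed

lemma compact_converse:
  fixes A :: "('a::topological_space \<times> 'b::topological_space) set"
  assumes "compact A"
  shows "compact (A\<inverse>)"
proof -
  have "A\<inverse> = (\<lambda>p. (snd p, fst p)) ` A"
    by force
  then show ?thesis
    using assms by (auto intro!: compact_continuous_image continuous_intros)
qed

lemma compact_relcomp:
  fixes A B :: "('a::t2_space \<times> 'a) set"
  assumes "compact A" "compact B"
  shows "compact (A O B)"
proof -
  have "A O B = (\<lambda>p. (fst (fst p), snd (snd p))) ` ((A \<times> B) \<inter> {p. snd (fst p) = fst (snd p)})"
    by force
  moreover have "closed {p :: ('a \<times> 'a) \<times> ('a \<times> 'a). snd (fst p) = fst (snd p)}"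
    by (intro closed_Collect_eq continuous_intros)
  then have "compact ((A \<times> B) \<inter> {p. snd (fst p) = fst (snd p)})"
    using assms by (intro compact_Int_closed compact_Times)
  ultimately show ?thesis
    by (auto intro!: compact_continuous_image continuous_intros)
qed

lemma relpow_mono:
  fixes R S :: "('a \<times> 'a) set"
  shows "R \<subseteq> S \<Longrightarrow> R ^^ n \<subseteq> S ^^ n"
  by (induction n) (simp_all add: relcomp_mono)

text \<open>If all classes of the reflexive transitive closure have at most \<open>n\<close> elements, every
  closure pair is joined by a chain of at most \<open>n\<^sup>2\<close> steps, so the closure is a finite
  relational power of a compact relation.\<close>
lemma compact_rtrancl_Int_Times:
  fixes G :: "('a::t2_space \<times> 'a) set"
  assumes "compact K" "compact G" "G \<subseteq> K \<times> K"
    and classes: "\<And>x. finite (G\<^sup>* `` {x}) \<and> card (G\<^sup>* `` {x}) \<le> n"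
  shows "compact (G\<^sup>* \<inter> K \<times> K)"
proof -
  define M where "M = Id_on K \<union> G"
  define N where "N = Suc (n * n)"
  have "Id_on K = (\<lambda>x. (x, x)) ` K"
    by (auto simp: Id_on_def)
  then have "compact (Id_on K)"
    using assms(1) by (simp add: compact_continuous_image continuous_intros)
  then have "compact M"
    unfolding M_def using assms(2) by (rule compact_Un)
  then have "compact (M ^^ Suc m)" for m
    by (induction m) (simp_all add: compact_relcomp)
  moreover have "G\<^sup>* \<inter> K \<times> K = M ^^ N"
  proof
    have refl: "(x, x) \<in> M ^^ d" if "x \<in> K" for x d
      using that by (induction d) (auto simp: M_def intro: relpow_Suc_I)
    show "G\<^sup>* \<inter> K \<times> K \<subseteq> M ^^ N"
    proof clarify
      fix x y assume xy: "(x, y) \<in> G\<^sup>*" and "x \<in> K" "y \<in> K"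
      define C where "C = G\<^sup>* `` {x}"
      have "(x, y) \<in> (G \<inter> C \<times> C)\<^sup>*"
        using xy
      proof (induction rule: rtrancl_induct)
        case (step y z)
        then have "(y, z) \<in> G \<inter> C \<times> C"
          unfolding C_def by auto
        with step.IH show ?case
          by (rule rtrancl_into_rtrancl)
      qed simp
      moreover have "finite (G \<inter> C \<times> C)" "card (G \<inter> C \<times> C) \<le> n * n"
      proof -
        have "finite (C \<times> C)" "card (C \<times> C) \<le> n * n"
          using classes[of x] unfolding C_def by (auto simp: card_cartesian_product intro: mult_mono)
        then show "finite (G \<inter> C \<times> C)" "card (G \<inter> C \<times> C) \<le> n * n"
          using card_mono[of "C \<times> C" "G \<inter> C \<times> C"] by auto
      qed
      ultimately obtain m where "m \<le> n * n" "(x, y) \<in> (G \<inter> C \<times> C) ^^ m"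
        using rtrancl_finite_eq_relpow[of "G \<inter> C \<times> C"] le_trans by blast
      moreover have "G \<inter> C \<times> C \<subseteq> M"
        unfolding M_def by blast
      ultimately have "(x, y) \<in> M ^^ m" "N - m + m = N"
        using relpow_mono[of "G \<inter> C \<times> C" M m] unfolding N_def by auto
      then show "(x, y) \<in> M ^^ N"
        using relpow_trans[OF refl[OF \<open>x \<in> K\<close>, of "N - m"], of y m] by (simp only:)
    qed
    have "M \<subseteq> K \<times> K"
      using assms(3) unfolding M_def by auto
    then have "M ^^ Suc m \<subseteq> K \<times> K" for m
      by (induction m) auto
    moreover have "M ^^ m \<subseteq> G\<^sup>*" for m
      unfolding M_def using relpow_imp_rtrancl rtrancl_mono[of "Id_on K \<union> G" "G\<^sup>*"]
      by fastforce
    ultimately show "M ^^ N \<subseteq> G\<^sup>* \<inter> K \<times> K"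
      unfolding N_def by blast
  qed
  ultimately show ?thesis
    unfolding N_def by (simp only:)
qed

lemma polygon_gluing_subset_cball: "polygon_gluing w \<subseteq> cball 0 1 \<times> cball 0 1"
  unfolding polygon_gluing_def arc_point_def by auto

lemma compact_polygon_gluing: "compact (polygon_gluing w)"
proof -
  define I where "I = {(j, j'). j < length w \<and> j' < length w \<and> fst (w ! j) = fst (w ! j')}"
  have "polygon_gluing w = (\<Union>(j, j')\<in>I. (\<lambda>s. (arc_point w j s, arc_point w j' s)) ` {0..1})"
    unfolding polygon_gluing_def I_def by fastforce
  moreover have "finite I"
    unfolding I_def by (rule finite_subset[of _ "{..<length w} \<times> {..<length w}"]) auto
  moreover have "continuous_on {0..1} (arc_point w j)" for j
    unfolding arc_point_def by (cases "snd (w ! j)"; cases "w = []") (auto intro!: continuous_intros)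
  ultimately show ?thesis
    by (auto intro!: compact_UN compact_continuous_image continuous_on_Pair)
qed

theorem Hausdorff_space_surface: "Hausdorff_space (surface c h)"
proof -
  let ?K = "cball (0::complex) 1"
  let ?w = "surface_word c h"
  define G where "G = polygon_gluing ?w \<union> (polygon_gluing ?w)\<inverse>"
  have GK: "G \<subseteq> ?K \<times> ?K"
    unfolding G_def using polygon_gluing_subset_cball by blast
  have R: "polygon_equiv ?w = G\<^sup>*"
    unfolding polygon_equiv_def G_def ..
  have "polygon_equiv ?w `` ?K \<subseteq> ?K"
  proof clarify
    fix x y assume "(x, y) \<in> polygon_equiv ?w" "x \<in> ?K"
    then show "y \<in> ?K"
      unfolding R by (induction rule: rtrancl_induct) (use GK in auto)
  qed
  moreover have "sym (G\<^sup>*)"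
    unfolding G_def by (rule sym_rtrancl) (auto simp: sym_def)
  ultimately have "equiv ?K (polygon_equiv ?w \<inter> ?K \<times> ?K)"
    unfolding R equiv_def refl_on_def trans_def by (auto intro: rtrancl_trans simp: sym_def)
  moreover have "compact G"
    unfolding G_def using compact_polygon_gluing compact_converse by (blast intro: compact_Un)
  then have "compact (polygon_equiv ?w \<inter> ?K \<times> ?K)"
    unfolding R using polygon_equiv_class_finite[of ?w, unfolded R]
    by (intro compact_rtrancl_Int_Times[OF compact_cball _ GK])
  moreover have "quotient_top (top_of_set ?K) (polygon_equiv ?w)
      = quotient_top (top_of_set ?K) (polygon_equiv ?w \<inter> ?K \<times> ?K)"
    unfolding quotient_top_def using quotient_Int_Times[OF \<open>polygon_equiv ?w `` ?K \<subseteq> ?K\<close>] by simp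
  ultimately show ?thesis
    unfolding surface_def using Hausdorff_space_quotient_top[of ?K] by simp
qed

section \<open>Arcs in Hausdorff spaces\<close>

definition arc_in :: "'p topology \<Rightarrow> (real \<Rightarrow> 'p) \<Rightarrow> bool" where
  "arc_in X g \<longleftrightarrow> pathin X g \<and> inj_on g {0..1}"

lemma affine_unit_interval:
  fixes u v t :: real
  assumes "0 \<le> u" "u \<le> v" "v \<le> 1" "t \<in> {0..1}"
  shows "u + t * (v - u) \<in> {0..1}"
proof -
  have "0 \<le> t * (v - u)" "t * (v - u) \<le> v - u"
    using assms by (simp_all add: mult_left_le_one_le)
  then show ?thesis
    unfolding atLeastAtMost_iff using assms(1-3) by linarith
qed

lemma arc_in_subarc:
  assumes "arc_in X g" "0 \<le> u" "u < v" "v \<le> 1"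
  shows "arc_in X (\<lambda>t. g (u + t * (v - u)))"
    and "(\<lambda>t. g (u + t * (v - u))) ` {0..1} \<subseteq> g ` {0..1}"
proof -
  have into: "u + t * (v - u) \<in> {0..1}" if "t \<in> {0..1}" for t
    using affine_unit_interval assms(2-4) that by simp
  then have "continuous_map (top_of_set {0..1}) (top_of_set {0..1}) (\<lambda>t. u + t * (v - u))"
    by (auto intro!: continuous_intros)
  then have "pathin X (g \<circ> (\<lambda>t. u + t * (v - u)))"
    using assms(1) continuous_map_compose unfolding arc_in_def pathin_def by blast
  moreover have "inj_on (\<lambda>t. g (u + t * (v - u))) {0..1}"
  proof (rule inj_onI)
    fix x y assume "x \<in> {0..1}" "y \<in> {0..1}" "g (u + x * (v - u)) = g (u + y * (v - u))"
    then have "u + x * (v - u) = u + y * (v - u)"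
      using assms(1) into unfolding arc_in_def inj_on_def by blast
    then show "x = y"
      using assms(3) by simp
  qed
  ultimately show "arc_in X (\<lambda>t. g (u + t * (v - u)))"
    unfolding arc_in_def o_def by simp
  show "(\<lambda>t. g (u + t * (v - u))) ` {0..1} \<subseteq> g ` {0..1}"
    using into by auto
qed

lemma arc_in_reverse:
  assumes "arc_in X g"
  shows "arc_in X (\<lambda>t. g (1 - t))" and "(\<lambda>t. g (1 - t)) ` {0..1} = g ` {0..1}"
proof -
  have "continuous_map (top_of_set {0..1}) (top_of_set {0..1}) (\<lambda>t::real. 1 - t)"
    by (auto intro!: continuous_intros)
  then have "pathin X (g \<circ> (\<lambda>t. 1 - t))"
    using assms continuous_map_compose unfolding arc_in_def pathin_def by blast
  moreover have "inj_on (\<lambda>t. g (1 - t)) {0..1}"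
  proof (rule inj_onI)
    fix x y :: real assume "x \<in> {0..1}" "y \<in> {0..1}" "g (1 - x) = g (1 - y)"
    then have "1 - x = 1 - y"
      using assms unfolding arc_in_def inj_on_def by auto
    then show "x = y"
      by simp
  qed
  ultimately show "arc_in X (\<lambda>t. g (1 - t))"
    unfolding arc_in_def o_def by simp
  have "{0..1} \<subseteq> (\<lambda>t. 1 - t) ` {0..1::real}"
  proof
    fix x :: real assume "x \<in> {0..1}"
    then show "x \<in> (\<lambda>t. 1 - t) ` {0..1}"
      by (intro image_eqI[of x _ "1 - x"]) auto
  qed
  then have "(\<lambda>t. 1 - t) ` {0..1::real} = {0..1}"
    by auto
  then show "(\<lambda>t. g (1 - t)) ` {0..1} = g ` {0..1}"
    by (simp add: image_image[symmetric])
qed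

lemma arc_in_join:
  assumes "arc_in X g1" "arc_in X g2" "g1 1 = g2 0"
    and meet: "\<And>t s. t \<in> {0..1} \<Longrightarrow> s \<in> {0..1} \<Longrightarrow> g1 t = g2 s \<Longrightarrow> t = 1 \<and> s = 0"
  shows "arc_in X (\<lambda>t. if t \<le> 1/2 then g1 (2 * t) else g2 (2 * t - 1))"
    and "(\<lambda>t. if t \<le> 1/2 then g1 (2 * t) else g2 (2 * t - 1)) ` {0..1} \<subseteq> g1 ` {0..1} \<union> g2 ` {0..1}"
proof -
  let ?I = "top_of_set {0..1::real}"
  let ?g = "\<lambda>x. if x \<le> 1/2 then (g1 \<circ> (\<lambda>t. 2 * t)) x else (g2 \<circ> (\<lambda>t. 2 * t - 1)) x"
  have "continuous_map ?I X ?g"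
  proof (intro continuous_map_cases_le continuous_map_compose)
    show "continuous_map (subtopology ?I {x \<in> topspace ?I. x \<le> 1/2}) ?I ((*) 2)"
      by (auto simp: continuous_map_in_subtopology continuous_map_from_subtopology)
    have "continuous_map (subtopology ?I {x. 0 \<le> x \<and> x \<le> 1 \<and> 1 \<le> x * 2}) euclideanreal
        (\<lambda>t. 2 * t - 1)"
      by (intro continuous_intros) (force intro: continuous_map_from_subtopology)
    then show "continuous_map (subtopology ?I {x \<in> topspace ?I. 1/2 \<le> x}) ?I (\<lambda>t. 2 * t - 1)"
      by (force simp: continuous_map_in_subtopology)
    show "(g1 \<circ> (*) 2) x = (g2 \<circ> (\<lambda>t. 2 * t - 1)) x" if "x = 1/2" for x
    proof -
      have "2 * x = 1" "2 * x - 1 = 0"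
        using that by simp_all
      then show ?thesis
        using assms(3) by simp
    qed
  qed (use assms(1,2) in \<open>auto simp: arc_in_def pathin_def\<close>)
  moreover have "inj_on ?g {0..1}"
  proof (rule inj_onI)
    fix x y :: real assume xy: "x \<in> {0..1}" "y \<in> {0..1}" and eq: "?g x = ?g y"
    have inj: "inj_on g1 {0..1}" "inj_on g2 {0..1}"
      using assms(1,2) unfolding arc_in_def by auto
    show "x = y"
    proof (cases "x \<le> 1/2"; cases "y \<le> 1/2")
      assume "x \<le> 1/2" "y \<le> 1/2"
      then show "x = y"
        using inj_onD[OF inj(1), of "2 * x" "2 * y"] xy eq by simp
    next
      assume "x \<le> 1/2" "\<not> y \<le> 1/2"
      then show "x = y"
        using xy eq meet[of "2 * x" "2 * y - 1"] by simp
    next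
      assume "\<not> x \<le> 1/2" "y \<le> 1/2"
      then show "x = y"
        using xy eq meet[of "2 * y" "2 * x - 1"] by simp
    next
      assume "\<not> x \<le> 1/2" "\<not> y \<le> 1/2"
      then show "x = y"
        using inj_onD[OF inj(2), of "2 * x - 1" "2 * y - 1"] xy eq by simp
    qed
  qed
  ultimately show "arc_in X (\<lambda>t. if t \<le> 1/2 then g1 (2 * t) else g2 (2 * t - 1))"
    unfolding arc_in_def pathin_def o_def by simp
  show "(\<lambda>t. if t \<le> 1/2 then g1 (2 * t) else g2 (2 * t - 1)) ` {0..1} \<subseteq> g1 ` {0..1} \<union> g2 ` {0..1}"
    by auto
qed

text \<open>The image of \<open>g2\<close> is compact, hence closed in a Hausdorff space, so the parameters at
  which \<open>g1\<close> meets it have a least element.\<close>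
lemma arc_in_first_hit:
  assumes "Hausdorff_space X" "arc_in X g1" "arc_in X g2" "g1 1 = g2 0"
  obtains t0 s0 where "t0 \<in> {0..1}" "s0 \<in> {0..1}" "g1 t0 = g2 s0"
    and "\<And>t. t \<in> {0..1} \<Longrightarrow> g1 t \<in> g2 ` {0..1} \<Longrightarrow> t0 \<le> t"
proof -
  let ?I = "top_of_set {0..1::real}"
  have "compactin X (g2 ` {0..1})"
    using assms(3) compactin_path_image unfolding arc_in_def by blast
  then have "closedin X (g2 ` {0..1})"
    using assms(1) compactin_imp_closedin by blast
  then have "closedin ?I {t \<in> topspace ?I. g1 t \<in> g2 ` {0..1}}"
    using assms(2) closedin_continuous_map_preimage unfolding arc_in_def pathin_def by blast
  moreover define S where "S = {t \<in> {0..1}. g1 t \<in> g2 ` {0..1}}"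
  ultimately have "closed S"
    using closedin_closed_trans by auto
  have "1 \<in> S"
    unfolding S_def using assms(4) by force
  have bdd: "bdd_below S"
    unfolding S_def by (auto intro: bdd_belowI[of _ 0])
  have "Inf S \<in> S"
    using closed_contains_Inf[OF _ bdd \<open>closed S\<close>] \<open>1 \<in> S\<close> by blast
  moreover have "Inf S \<le> t" if "t \<in> S" for t
    using cInf_lower[OF that bdd] .
  ultimately show ?thesis
    using that unfolding S_def by blast
qed

lemma arc_in_shortcut:
  assumes "Hausdorff_space X" "arc_in X g1" "arc_in X g2" "g1 1 = g2 0" "g1 0 \<noteq> g2 1"
  obtains g where "arc_in X g" "g 0 = g1 0" "g 1 = g2 1"
    "g ` {0..1} \<subseteq> g1 ` {0..1} \<union> g2 ` {0..1}"
proof -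
  obtain t0 s0 where t0: "t0 \<in> {0..1}" and s0: "s0 \<in> {0..1}" and hit: "g1 t0 = g2 s0"
    and first: "\<And>t. t \<in> {0..1} \<Longrightarrow> g1 t \<in> g2 ` {0..1} \<Longrightarrow> t0 \<le> t"
    using arc_in_first_hit[OF assms(1-4)] by blast
  define h1 where "h1 = (\<lambda>t. g1 (0 + t * (t0 - 0)))"
  define h2 where "h2 = (\<lambda>t. g2 (s0 + t * (1 - s0)))"
  have "t0 = 0 \<or> s0 = 1 \<or> (0 < t0 \<and> s0 < 1)"
    using t0 s0 by auto
  moreover have "s0 < 1" if "t0 = 0"
    using that s0 hit assms(5) by (cases "s0 = 1") auto
  moreover have "0 < t0" if "s0 = 1"
    using that t0 hit assms(5) by (cases "t0 = 0") auto
  ultimately consider "t0 = 0" "s0 < 1" | "0 < t0" "s0 = 1" | "0 < t0" "s0 < 1"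
    by blast
  then show ?thesis
  proof cases
    case 1
    then show ?thesis
      using that[of h2] arc_in_subarc[OF assms(3), of s0 1] s0 hit unfolding h2_def by auto
  next
    case 2
    then show ?thesis
      using that[of h1] arc_in_subarc[OF assms(2), of 0 t0] t0 hit unfolding h1_def by auto
  next
    case 3
    have h1: "arc_in X h1" "h1 ` {0..1} \<subseteq> g1 ` {0..1}"
      using arc_in_subarc[OF assms(2), of 0 t0] t0 3 unfolding h1_def by auto
    have h2: "arc_in X h2" "h2 ` {0..1} \<subseteq> g2 ` {0..1}"
      using arc_in_subarc[OF assms(3), of s0 1] s0 3 unfolding h2_def by auto
    have meet: "t = 1 \<and> s = 0" if ts: "t \<in> {0..1}" "s \<in> {0..1}" "h1 t = h2 s" for t s
    proof -
      have s': "s0 + s * (1 - s0) \<in> {0..1}" and t': "t * t0 \<in> {0..1}"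
        using affine_unit_interval[of s0 1 s] affine_unit_interval[of 0 t0 t] ts(1,2) t0 s0 by auto
      moreover have "g1 (t * t0) \<in> g2 ` {0..1}"
        using ts(3) s' unfolding h1_def h2_def by auto
      ultimately have "t0 \<le> t * t0"
        using first by blast
      then have "t = 1"
        using ts(1) 3 by (simp add: mult_le_cancel_right1)
      then have "g2 s0 = g2 (s0 + s * (1 - s0))"
        using ts(3) hit unfolding h1_def h2_def by simp
      then have "s0 = s0 + s * (1 - s0)"
        using assms(3) s0 s' unfolding arc_in_def inj_on_def by blast
      with \<open>t = 1\<close> show ?thesis
        using 3 by simp
    qed
    have "h1 1 = h2 0"
      unfolding h1_def h2_def using hit by simp
    note join = arc_in_join[OF h1(1) h2(1) this meet]
    show ?thesis
    proof (rule that[OF join(1)])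
      show "(if 0 \<le> (1::real) / 2 then h1 (2 * 0) else h2 (2 * 0 - 1)) = g1 0"
        unfolding h1_def by simp
      show "(if 1 \<le> (1::real) / 2 then h1 (2 * 1) else h2 (2 * 1 - 1)) = g2 1"
        unfolding h2_def by simp
      show "(\<lambda>t. if t \<le> 1/2 then h1 (2 * t) else h2 (2 * t - 1)) ` {0..1}
          \<subseteq> g1 ` {0..1} \<union> g2 ` {0..1}"
        using join(2) h1(2) h2(2) by blast
    qed
  qed
qed

section \<open>Paths and drawings\<close>

definition path_edges :: "'a list \<Rightarrow> 'a set set" where
  "path_edges P = {{P ! i, P ! Suc i} | i. Suc i < length P}"

lemma path_edges_Cons:
  assumes "Q \<noteq> []"
  shows "path_edges (u # Q) = insert {u, hd Q} (path_edges Q)"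
proof
  show "path_edges (u # Q) \<subseteq> insert {u, hd Q} (path_edges Q)"
  proof
    fix a assume "a \<in> path_edges (u # Q)"
    then obtain i where i: "a = {(u # Q) ! i, (u # Q) ! Suc i}" "Suc i < length (u # Q)"
      unfolding path_edges_def by blast
    then show "a \<in> insert {u, hd Q} (path_edges Q)"
      using assms unfolding path_edges_def by (cases i) (auto simp: hd_conv_nth)
  qed
  show "insert {u, hd Q} (path_edges Q) \<subseteq> path_edges (u # Q)"
  proof
    fix a assume "a \<in> insert {u, hd Q} (path_edges Q)"
    then consider "a = {u, hd Q}" | i where "a = {Q ! i, Q ! Suc i}" "Suc i < length Q"
      unfolding path_edges_def by blast
    then have "\<exists>i. a = {(u # Q) ! i, (u # Q) ! Suc i} \<and> Suc i < length (u # Q)"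
    proof cases
      case 1
      then show ?thesis
        using assms by (intro exI[of _ 0]) (auto simp: hd_conv_nth)
    next
      case (2 i)
      then show ?thesis
        by (intro exI[of _ "Suc i"]) simp
    qed
    then show "a \<in> path_edges (u # Q)"
      unfolding path_edges_def by blast
  qed
qed

lemma is_path_Cons:
  assumes "is_path E (u # Q)" "Q \<noteq> []"
  shows "is_path E Q" "{u, hd Q} \<in> E" "u \<notin> set Q"
proof -
  have step: "{(u # Q) ! i, (u # Q) ! Suc i} \<in> E" if "Suc i < length (u # Q)" for i
    using assms(1) that unfolding is_path_def by blast
  show "is_path E Q"
    using assms step[of "Suc _"] unfolding is_path_def by auto
  show "{u, hd Q} \<in> E"
    using assms(2) step[of 0] by (simp add: hd_conv_nth)
  show "u \<notin> set Q"
    using assms(1) unfolding is_path_def by simp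
qed

lemma path_edges_subset: "is_path E P \<Longrightarrow> path_edges P \<subseteq> E"
  unfolding path_edges_def is_path_def by auto

lemma path_edge_subset_set: "a \<in> path_edges P \<Longrightarrow> a \<subseteq> set P"
  unfolding path_edges_def by auto

lemma card_path_edges: "card (path_edges P) \<le> length P - 1"
proof -
  have "path_edges P = (\<lambda>i. {P ! i, P ! Suc i}) ` {..< length P - 1}"
    unfolding path_edges_def by auto
  then show ?thesis
    by (metis card_image_le card_lessThan finite_lessThan)
qed

lemma finite_path_edges: "finite (path_edges P)"
proof -
  have "path_edges P = (\<lambda>i. {P ! i, P ! Suc i}) ` {..< length P - 1}"
    unfolding path_edges_def by auto
  then show ?thesis
    by simp
qed

lemma internal_subset: "internal P \<subseteq> set P"
  unfolding internal_def by (cases P) (auto dest: in_set_butlastD)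

lemma set_eq_ends_internal:
  assumes "2 \<le> length P"
  shows "set P = insert (hd P) (insert (last P) (internal P))"
proof -
  obtain a Q where P: "P = a # Q"
    using assms by (cases P) auto
  with assms have "Q \<noteq> []"
    by auto
  with P have "set Q = insert (last Q) (set (butlast Q))"
    by (metis append_butlast_last_id list.set(2) rotate1.simps(2) set_rotate1)
  then show ?thesis
    unfolding internal_def using P \<open>Q \<noteq> []\<close> by auto
qed

lemma simple_graph_edge_subset: "simple_graph V E \<Longrightarrow> e \<in> E \<Longrightarrow> e \<subseteq> V"
  unfolding simple_graph_def by fastforce

lemma set_path_subset:
  assumes "simple_graph V E" "is_path E P" "2 \<le> length P"
  shows "set P \<subseteq> V"
proof -
  have "set P \<subseteq> \<Union>(path_edges P)"
  proof
    fix x assume "x \<in> set P"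
    then obtain i where i: "i < length P" "x = P ! i"
      by (auto simp: in_set_conv_nth)
    show "x \<in> \<Union>(path_edges P)"
    proof (cases "Suc i < length P")
      case True
      then show ?thesis
        using i unfolding path_edges_def by blast
    next
      case False
      then have "Suc (i - 1) < length P" "Suc (i - 1) = i"
        using i assms(3) by auto
      moreover have "{P ! (i - 1), P ! Suc (i - 1)} \<in> path_edges P"
        unfolding path_edges_def using \<open>Suc (i - 1) < length P\<close> by blast
      ultimately show ?thesis
        using i by auto
    qed
  qed
  also have "\<Union>(path_edges P) \<subseteq> V"
  proof (rule Union_least)
    fix a assume "a \<in> path_edges P"
    then show "a \<subseteq> V"
      using path_edges_subset[OF assms(2)] simple_graph_edge_subset[OF assms(1)] by blast
  qed
  finally show ?thesis .
qed

lemma drawing_inj: "drawing X V E pv ce \<Longrightarrow> inj_on pv V"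
  by (simp add: drawing_def)

lemma drawing_vertices: "drawing X V E pv ce \<Longrightarrow> pv ` V \<subseteq> topspace X"
  by (simp add: drawing_def)

lemma drawing_edge:
  "drawing X V E pv ce \<Longrightarrow> e \<in> E \<Longrightarrow>
    arc_in X (ce e) \<and> (\<exists>v w. e = {v, w} \<and> ce e 0 = pv v \<and> ce e 1 = pv w)"
  by (simp add: drawing_def arc_in_def pathin_def)

lemma drawing_interior: "drawing X V E pv ce \<Longrightarrow> e \<in> E \<Longrightarrow> t \<in> {0<..<1} \<Longrightarrow> ce e t \<notin> pv ` V"
  by (simp add: drawing_def)

lemma drawing_no_triple_point:
  assumes "drawing X V E pv ce" "e1 \<in> E" "e2 \<in> E" "e3 \<in> E" "e1 \<noteq> e2" "e1 \<noteq> e3" "e2 \<noteq> e3"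
    and "p \<in> ce e1 ` {0<..<1}" "p \<in> ce e2 ` {0<..<1}" "p \<in> ce e3 ` {0<..<1}"
  shows False
proof -
  have "\<not> (\<exists>e1\<in>E. \<exists>e2\<in>E. \<exists>e3\<in>E. e1 \<noteq> e2 \<and> e1 \<noteq> e3 \<and> e2 \<noteq> e3 \<and>
      p \<in> ce e1 ` {0<..<1} \<and> p \<in> ce e2 ` {0<..<1} \<and> p \<in> ce e3 ` {0<..<1})"
    using assms(1) unfolding drawing_def by (elim conjE) (erule allE)
  moreover have "\<exists>e1\<in>E. \<exists>e2\<in>E. \<exists>e3\<in>E. e1 \<noteq> e2 \<and> e1 \<noteq> e3 \<and> e2 \<noteq> e3 \<and>
      p \<in> ce e1 ` {0<..<1} \<and> p \<in> ce e2 ` {0<..<1} \<and> p \<in> ce e3 ` {0<..<1}"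
    using assms(5-10) by (intro bexI[OF _ assms(2)] bexI[OF _ assms(3)] bexI[OF _ assms(4)] conjI)
  ultimately show False
    by (rule notE)
qed

lemma drawingI:
  assumes "pv ` V \<subseteq> topspace X" "inj_on pv V"
    and "\<And>e. e \<in> E \<Longrightarrow> arc_in X (ce e) \<and> (\<exists>v w. e = {v, w} \<and> ce e 0 = pv v \<and> ce e 1 = pv w)"
    and "\<And>e t. e \<in> E \<Longrightarrow> t \<in> {0<..<1} \<Longrightarrow> ce e t \<notin> pv ` V"
    and "\<And>e1 e2 e3 p. \<lbrakk>e1 \<in> E; e2 \<in> E; e3 \<in> E; e1 \<noteq> e2; e1 \<noteq> e3; e2 \<noteq> e3;
      p \<in> ce e1 ` {0<..<1}; p \<in> ce e2 ` {0<..<1}; p \<in> ce e3 ` {0<..<1}\<rbrakk> \<Longrightarrow> False"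
  shows "drawing X V E pv ce"
proof -
  have "\<forall>e\<in>E. continuous_map (top_of_set {0..1}) X (ce e) \<and> inj_on (ce e) {0..1} \<and>
      (\<exists>v w. e = {v, w} \<and> ce e 0 = pv v \<and> ce e 1 = pv w)"
    using assms(3) unfolding arc_in_def pathin_def by blast
  moreover have "\<forall>e\<in>E. \<forall>t\<in>{0<..<1}. ce e t \<notin> pv ` V"
    using assms(4) by blast
  moreover have "\<forall>p. \<not> (\<exists>e1\<in>E. \<exists>e2\<in>E. \<exists>e3\<in>E. e1 \<noteq> e2 \<and> e1 \<noteq> e3 \<and> e2 \<noteq> e3 \<and>
      p \<in> ce e1 ` {0<..<1} \<and> p \<in> ce e2 ` {0<..<1} \<and> p \<in> ce e3 ` {0<..<1})"
  proof (intro allI notI)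
    fix p
    assume "\<exists>e1\<in>E. \<exists>e2\<in>E. \<exists>e3\<in>E. e1 \<noteq> e2 \<and> e1 \<noteq> e3 \<and> e2 \<noteq> e3 \<and>
      p \<in> ce e1 ` {0<..<1} \<and> p \<in> ce e2 ` {0<..<1} \<and> p \<in> ce e3 ` {0<..<1}"
    then show False
      using assms(5) by (elim bexE conjE)
  qed
  ultimately show ?thesis
    unfolding drawing_def using assms(1,2) by (intro conjI)
qed

lemma crossing_pairsD:
  assumes "{e, f} \<in> crossing_pairs E c"
  shows "e \<in> E" "f \<in> E" "independent_edges e f" "c e ` {0..1} \<inter> c f ` {0..1} \<noteq> {}"
proof -
  have "\<exists>e' f'. {e, f} = {e', f'} \<and> e' \<in> E \<and> f' \<in> E \<and> independent_edges e' f' \<and>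
      c e' ` {0..1} \<inter> c f' ` {0..1} \<noteq> {}"
    using assms unfolding crossing_pairs_def by (simp only: mem_Collect_eq)
  then obtain e' f' where ef: "{e, f} = {e', f'}" "e' \<in> E" "f' \<in> E" "independent_edges e' f'"
    "c e' ` {0..1} \<inter> c f' ` {0..1} \<noteq> {}"
    by (elim exE conjE) (rule that)
  have swap: "e = e' \<and> f = f' \<or> e = f' \<and> f = e'"
    using ef(1) by (simp add: doubleton_eq_iff)
  then show "e \<in> E" "f \<in> E"
    using ef(2,3) by auto
  show "independent_edges e f"
    using swap ef(4) Int_commute[of e' f'] unfolding independent_edges_def by auto
  show "c e ` {0..1} \<inter> c f ` {0..1} \<noteq> {}"
    using swap ef(5) Int_commute[of "c e' ` {0..1}" "c f' ` {0..1}"] by auto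
qed

lemma drawing_edge_arc:
  assumes "drawing X V E pv ce" "{u, v} \<in> E"
  obtains g where "arc_in X g" "g 0 = pv u" "g 1 = pv v" "g ` {0..1} = ce {u, v} ` {0..1}"
proof -
  obtain u' v' where uv: "{u, v} = {u', v'}" "ce {u, v} 0 = pv u'" "ce {u, v} 1 = pv v'"
    and arc: "arc_in X (ce {u, v})"
    using drawing_edge[OF assms] by blast
  show ?thesis
  proof (cases "u' = u \<and> v' = v")
    case True
    then show ?thesis
      using that arc uv by blast
  next
    case False
    then have "u' = v" "v' = u"
      using uv(1) by (auto simp: doubleton_eq_iff)
    then show ?thesis
      using that arc_in_reverse[OF arc] uv by simp
  qed
qed

lemma drawing_path_arc:
  assumes "Hausdorff_space X" "drawing X V E pv ce" "simple_graph V E"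
  shows "is_path E P \<Longrightarrow> 2 \<le> length P \<Longrightarrow> \<exists>g. arc_in X g \<and> g 0 = pv (hd P) \<and>
    g 1 = pv (last P) \<and> g ` {0..1} \<subseteq> (\<Union>a\<in>path_edges P. ce a ` {0..1})"
proof (induction P)
  case (Cons u Q)
  have "Q \<noteq> []"
    using Cons.prems(2) by auto
  note Q = is_path_Cons[OF Cons.prems(1) this]
  obtain g1 where g1: "arc_in X g1" "g1 0 = pv u" "g1 1 = pv (hd Q)"
      "g1 ` {0..1} = ce {u, hd Q} ` {0..1}"
    using drawing_edge_arc[OF assms(2) Q(2)] by blast
  have edges: "path_edges (u # Q) = insert {u, hd Q} (path_edges Q)"
    using path_edges_Cons[OF \<open>Q \<noteq> []\<close>] .
  then have g1_image: "g1 ` {0..1} \<subseteq> (\<Union>a\<in>path_edges (u # Q). ce a ` {0..1})"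
    using g1(4) by blast
  show ?case
  proof (cases "length Q = 1")
    case True
    then have "last (u # Q) = hd Q"
      by (cases Q) auto
    then show ?thesis
      using g1(1-3) g1_image by (intro exI[of _ g1]) simp
  next
    case False
    moreover have "length Q \<noteq> 0"
      using \<open>Q \<noteq> []\<close> by simp
    ultimately have "2 \<le> length Q"
      by linarith
    then obtain g2 where g2: "arc_in X g2" "g2 0 = pv (hd Q)" "g2 1 = pv (last Q)"
        "g2 ` {0..1} \<subseteq> (\<Union>a\<in>path_edges Q. ce a ` {0..1})"
      using Cons.IH[OF Q(1)] by blast
    have "u \<noteq> last Q" "u \<in> V" "last Q \<in> V"
      using Q(3) \<open>Q \<noteq> []\<close> set_path_subset[OF assms(3) Cons.prems(1,2)] by auto
    then have ends_differ: "g1 0 \<noteq> g2 1"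
      using drawing_inj[OF assms(2)] g1(2) g2(3) by (auto dest: inj_onD)
    have junction: "g1 1 = g2 0"
      using g1(3) g2(2) by simp
    obtain g where g: "arc_in X g" "g 0 = g1 0" "g 1 = g2 1"
        "g ` {0..1} \<subseteq> g1 ` {0..1} \<union> g2 ` {0..1}"
      by (rule arc_in_shortcut[OF assms(1) g1(1) g2(1) junction ends_differ])
    have "path_edges Q \<subseteq> path_edges (u # Q)"
      using edges by auto
    then have "(\<Union>a\<in>path_edges Q. ce a ` {0..1}) \<subseteq> (\<Union>a\<in>path_edges (u # Q). ce a ` {0..1})"
      by (rule UN_mono) simp
    with g2(4) have g2_image: "g2 ` {0..1} \<subseteq> (\<Union>a\<in>path_edges (u # Q). ce a ` {0..1})"
      by (rule order_trans)
    have "g ` {0..1} \<subseteq> (\<Union>a\<in>path_edges (u # Q). ce a ` {0..1})"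
      using g(4) Un_least[OF g1_image g2_image] by (rule order_trans)
    moreover have "last (u # Q) = last Q"
      using \<open>Q \<noteq> []\<close> by simp
    ultimately show ?thesis
      using g(1-3) g1(2) g2(3) by (intro exI[of _ g]) simp
  qed
qed simp

section \<open>Drawing a topological minor along its subdivision paths\<close>

locale topological_minor =
  fixes VG :: "'a set" and EG :: "'a set set" and VH :: "'b set" and EH :: "'b set set"
    and \<phi> :: "'b \<Rightarrow> 'a" and P :: "'b set \<Rightarrow> 'a list"
  assumes simple_G: "simple_graph VG EG" and simple_H: "simple_graph VH EH"
    and inj_branch: "inj_on \<phi> VH" and branch_in_VG: "\<phi> ` VH \<subseteq> VG"
    and is_path_subdiv: "e \<in> EH \<Longrightarrow> is_path EG (P e)"
    and ends_subdiv: "e \<in> EH \<Longrightarrow> \<exists>x y. e = {x, y} \<and> hd (P e) = \<phi> x \<and> last (P e) = \<phi> y"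
    and internal_not_branch: "e \<in> EH \<Longrightarrow> internal (P e) \<inter> \<phi> ` VH = {}"
    and internal_disjoint:
      "e \<in> EH \<Longrightarrow> f \<in> EH \<Longrightarrow> e \<noteq> f \<Longrightarrow> internal (P e) \<inter> internal (P f) = {}"
begin

lemma edge_subset_VH: "e \<in> EH \<Longrightarrow> e \<subseteq> VH"
  using simple_graph_edge_subset[OF simple_H] .

lemma subdiv_ends:
  assumes "e \<in> EH"
  obtains x y where "x \<noteq> y" "x \<in> VH" "y \<in> VH" "e = {x, y}" "hd (P e) = \<phi> x" "last (P e) = \<phi> y"
proof -
  obtain x y where xy: "e = {x, y}" "hd (P e) = \<phi> x" "last (P e) = \<phi> y"
    using ends_subdiv[OF assms] by blast
  obtain v w where "v \<noteq> w" "e = {v, w}"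
    using simple_H assms unfolding simple_graph_def by blast
  then have "x \<noteq> y"
    using xy(1) by (auto simp: doubleton_eq_iff)
  then show ?thesis
    using that xy edge_subset_VH[OF assms] by blast
qed

lemma branch_image_edge: "e \<in> EH \<Longrightarrow> \<phi> ` e = {hd (P e), last (P e)}"
  by (metis subdiv_ends image_insert image_empty)

lemma two_le_length_subdiv:
  assumes "e \<in> EH"
  shows "2 \<le> length (P e)"
proof -
  obtain x y where "x \<noteq> y" "x \<in> VH" "y \<in> VH" "hd (P e) = \<phi> x" "last (P e) = \<phi> y"
    using subdiv_ends[OF assms] by metis
  then have "hd (P e) \<noteq> last (P e)"
    using inj_branch by (auto dest: inj_onD)
  moreover obtain a Q where "P e = a # Q"
    using is_path_subdiv[OF assms] unfolding is_path_def by (cases "P e") auto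
  ultimately show ?thesis
    by (cases Q) auto
qed

lemma path_edge_in_EG: "e \<in> EH \<Longrightarrow> a \<in> path_edges (P e) \<Longrightarrow> a \<in> EG"
  using path_edges_subset[OF is_path_subdiv] by blast

lemma set_subdiv: "e \<in> EH \<Longrightarrow> set (P e) = internal (P e) \<union> \<phi> ` e"
  using set_eq_ends_internal[OF two_le_length_subdiv] branch_image_edge by auto

lemma set_subdiv_subset_VG: "e \<in> EH \<Longrightarrow> set (P e) \<subseteq> VG"
  using set_path_subset[OF simple_G is_path_subdiv two_le_length_subdiv] .

lemma not_internal_if_shared:
  assumes "e \<in> EH" "f \<in> EH" "e \<noteq> f" "u \<in> set (P f)"
  shows "u \<notin> internal (P e)"
proof
  assume u: "u \<in> internal (P e)"
  then have "u \<notin> \<phi> ` f"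
    using internal_not_branch[OF assms(1)] edge_subset_VH[OF assms(2)] by blast
  then have "u \<in> internal (P f)"
    using set_subdiv[OF assms(2)] assms(4) by blast
  then show False
    using internal_disjoint[OF assms(1-3)] u by blast
qed

lemma shared_vertex_branch:
  assumes "e \<in> EH" "f \<in> EH" "e \<noteq> f" "u \<in> set (P e)" "u \<in> set (P f)"
  shows "u \<in> \<phi> ` e" "u \<in> \<phi> ` f"
  using set_subdiv[OF assms(1)] set_subdiv[OF assms(2)] assms(4,5)
    not_internal_if_shared[OF assms(1-3,5)] not_internal_if_shared[OF assms(2,1) _ assms(4)] assms(3)
  by auto

lemma path_edges_subdiv_disjoint:
  assumes "e \<in> EH" "f \<in> EH" "a \<in> path_edges (P e)" "a \<in> path_edges (P f)"
  shows "e = f"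
proof (rule ccontr)
  assume "e \<noteq> f"
  obtain v w where "v \<noteq> w" "a = {v, w}"
    using simple_G path_edges_subset[OF is_path_subdiv[OF assms(1)]] assms(3)
    unfolding simple_graph_def by blast
  moreover have "a \<subseteq> \<phi> ` e" "a \<subseteq> \<phi> ` f"
    using shared_vertex_branch[OF assms(1,2) \<open>e \<noteq> f\<close>] path_edge_subset_set assms(3,4) by blast+
  ultimately have "\<phi> ` e = a" "\<phi> ` f = a"
    using branch_image_edge[OF assms(1)] branch_image_edge[OF assms(2)] by auto
  then show False
    using inj_on_image_eq_iff[OF inj_branch edge_subset_VH[OF assms(1)] edge_subset_VH[OF assms(2)]]
      \<open>e \<noteq> f\<close> by simp
qed

lemma path_edges_subdiv_independent:
  assumes "e \<in> EH" "f \<in> EH" "independent_edges e f"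
    and "a \<in> path_edges (P e)" "b \<in> path_edges (P f)"
  shows "a \<inter> b = {}"
proof (rule ccontr)
  assume "a \<inter> b \<noteq> {}"
  then obtain u where u: "u \<in> set (P e)" "u \<in> set (P f)"
    using path_edge_subset_set assms(4,5) by blast
  have "e \<noteq> f"
    using assms(1,3) subdiv_ends unfolding independent_edges_def by (metis insert_not_empty Int_absorb)
  then obtain x y where "x \<in> e" "y \<in> f" "\<phi> x = \<phi> y"
    using shared_vertex_branch[OF assms(1,2) _ u] by (metis imageE)
  then show False
    using inj_branch edge_subset_VH[OF assms(1)] edge_subset_VH[OF assms(2)] assms(3)
    unfolding independent_edges_def inj_on_def by blast
qed

text \<open>Branch vertices are charged to themselves, internal subdivision vertices to an end of
  the unique branch edge whose path contains them.\<close>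
definition owner :: "'a \<Rightarrow> 'b" where
  "owner u = (if u \<in> \<phi> ` VH then inv_into VH \<phi> u else (SOME z. \<exists>f\<in>EH. u \<in> internal (P f) \<and> z \<in> f))"

lemma owner_mem:
  assumes "f \<in> EH" "u \<in> set (P f)"
  shows "owner u \<in> f"
proof (cases "u \<in> \<phi> ` VH")
  case True
  then have "u \<in> \<phi> ` f"
    using set_subdiv[OF assms(1)] assms(2) internal_not_branch[OF assms(1)] by blast
  then obtain x where "x \<in> f" "u = \<phi> x"
    by blast
  moreover from this have "x \<in> VH"
    using edge_subset_VH[OF assms(1)] by blast
  ultimately have "owner u = x"
    unfolding owner_def using True inv_into_f_f[OF inj_branch] by simp
  then show ?thesis
    using \<open>x \<in> f\<close> by simp
next
  case False
  then have u: "u \<in> internal (P f)"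
    using set_subdiv[OF assms(1)] assms(2) edge_subset_VH[OF assms(1)] by blast
  obtain z where "z \<in> f"
    using subdiv_ends[OF assms(1)] by blast
  then have "\<exists>z. \<exists>f'\<in>EH. u \<in> internal (P f') \<and> z \<in> f'"
    using assms(1) u by blast
  then have "\<exists>f'\<in>EH. u \<in> internal (P f') \<and> (SOME z. \<exists>f\<in>EH. u \<in> internal (P f) \<and> z \<in> f) \<in> f'"
    by (rule someI_ex)
  then obtain f' where f': "f' \<in> EH" "u \<in> internal (P f')"
    "(SOME z. \<exists>f\<in>EH. u \<in> internal (P f) \<and> z \<in> f) \<in> f'"
    by blast
  have "f' = f"
  proof (rule ccontr)
    assume "f' \<noteq> f"
    then show False
      using internal_disjoint[OF f'(1) assms(1)] f'(2) u by blast
  qed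
  moreover have "owner u = (SOME z. \<exists>f\<in>EH. u \<in> internal (P f) \<and> z \<in> f)"
    unfolding owner_def using False by simp
  ultimately show ?thesis
    using f'(3) by simp
qed

end

locale topological_minor_drawing = topological_minor VG EG VH EH \<phi> P
  for VG :: "'a set" and EG and VH :: "'b set" and EH and \<phi> and P +
  fixes X :: "'p topology" and pv :: "'a \<Rightarrow> 'p" and ce :: "'a set \<Rightarrow> real \<Rightarrow> 'p"
  assumes Hausdorff: "Hausdorff_space X" and drawing_G: "drawing X VG EG pv ce"
begin

definition branch_curve :: "'b set \<Rightarrow> real \<Rightarrow> 'p" where
  "branch_curve e = (SOME g. arc_in X g \<and> g 0 = pv (hd (P e)) \<and> g 1 = pv (last (P e)) \<and>
     g ` {0..1} \<subseteq> (\<Union>a\<in>path_edges (P e). ce a ` {0..1}))"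

lemma branch_curve:
  assumes "e \<in> EH"
  shows "arc_in X (branch_curve e)" "branch_curve e 0 = pv (hd (P e))"
    "branch_curve e 1 = pv (last (P e))"
    "branch_curve e ` {0..1} \<subseteq> (\<Union>a\<in>path_edges (P e). ce a ` {0..1})"
proof -
  have "\<exists>g. arc_in X g \<and> g 0 = pv (hd (P e)) \<and> g 1 = pv (last (P e)) \<and>
      g ` {0..1} \<subseteq> (\<Union>a\<in>path_edges (P e). ce a ` {0..1})"
    by (rule drawing_path_arc[OF Hausdorff drawing_G simple_G is_path_subdiv[OF assms]
          two_le_length_subdiv[OF assms]])
  then have "arc_in X (branch_curve e) \<and> branch_curve e 0 = pv (hd (P e)) \<and>
      branch_curve e 1 = pv (last (P e)) \<and>
      branch_curve e ` {0..1} \<subseteq> (\<Union>a\<in>path_edges (P e). ce a ` {0..1})"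
    unfolding branch_curve_def by (rule someI_ex)
  then show "arc_in X (branch_curve e)" "branch_curve e 0 = pv (hd (P e))"
    "branch_curve e 1 = pv (last (P e))"
    "branch_curve e ` {0..1} \<subseteq> (\<Union>a\<in>path_edges (P e). ce a ` {0..1})"
    by simp_all
qed

text \<open>The ends of the path are excluded because the curve is injective.\<close>
lemma branch_curve_interior:
  assumes "e \<in> EH" "t \<in> {0<..<1}"
  shows "(\<exists>a\<in>path_edges (P e). \<exists>\<tau>\<in>{0<..<1}. branch_curve e t = ce a \<tau>)
    \<or> (\<exists>u\<in>internal (P e). branch_curve e t = pv u)"
proof -
  have t: "t \<in> {0..1}"
    using assms(2) by simp
  then have "branch_curve e t \<in> (\<Union>a\<in>path_edges (P e). ce a ` {0..1})"
    using branch_curve(4)[OF assms(1)] by blast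
  then obtain a \<tau> where a: "a \<in> path_edges (P e)" "\<tau> \<in> {0..1}" "branch_curve e t = ce a \<tau>"
    by blast
  show ?thesis
  proof (cases "\<tau> \<in> {0<..<1}")
    case True
    then show ?thesis
      using a by blast
  next
    case False
    then have "\<tau> = 0 \<or> \<tau> = 1"
      using a(2) by auto
    moreover obtain v w where "a = {v, w}" "ce a 0 = pv v" "ce a 1 = pv w"
      using drawing_edge[OF drawing_G path_edge_in_EG[OF assms(1) a(1)]] by blast
    ultimately have "\<exists>u\<in>a. branch_curve e t = pv u"
      using a(3) by auto
    then obtain u where u: "u \<in> a" "branch_curve e t = pv u"
      by blast
    have inj: "inj_on (branch_curve e) {0..1}"
      using branch_curve(1)[OF assms(1)] unfolding arc_in_def by simp
    have "u \<noteq> hd (P e)"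
    proof
      assume "u = hd (P e)"
      then have "branch_curve e t = branch_curve e 0"
        using branch_curve(2)[OF assms(1)] u(2) by simp
      then have "t = 0"
        using inj_onD[OF inj _ t] by simp
      then show False
        using assms(2) by simp
    qed
    moreover have "u \<noteq> last (P e)"
    proof
      assume "u = last (P e)"
      then have "branch_curve e t = branch_curve e 1"
        using branch_curve(3)[OF assms(1)] u(2) by simp
      then have "t = 1"
        using inj_onD[OF inj _ t] by simp
      then show False
        using assms(2) by simp
    qed
    moreover have "u \<in> internal (P e) \<union> {hd (P e), last (P e)}"
      using set_subdiv[OF assms(1)] branch_image_edge[OF assms(1)] u(1)
        path_edge_subset_set[OF a(1)] by blast
    ultimately show ?thesis
      using u(2) by blast
  qed
qed

lemma branch_curve_not_branch_vertex:
  assumes "e \<in> EH" "t \<in> {0<..<1}"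
  shows "branch_curve e t \<notin> pv ` \<phi> ` VH"
proof
  assume "branch_curve e t \<in> pv ` \<phi> ` VH"
  then obtain z where z: "z \<in> VH" "branch_curve e t = pv (\<phi> z)"
    by blast
  have "\<phi> z \<in> VG"
    using branch_in_VG z(1) by blast
  from branch_curve_interior[OF assms] show False
  proof (elim disjE bexE)
    fix a \<tau> assume a: "a \<in> path_edges (P e)" "\<tau> \<in> {0<..<1}" "branch_curve e t = ce a \<tau>"
    have "ce a \<tau> \<notin> pv ` VG"
      by (rule drawing_interior[OF drawing_G path_edge_in_EG[OF assms(1) a(1)] a(2)])
    moreover have "ce a \<tau> = pv (\<phi> z)"
      using a(3) z(2) by simp
    moreover have "pv (\<phi> z) \<in> pv ` VG"
      using \<open>\<phi> z \<in> VG\<close> by (rule imageI)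
    ultimately show False
      by (simp only: not_True_eq_False)
  next
    fix u assume u: "u \<in> internal (P e)" "branch_curve e t = pv u"
    then have "u \<in> VG"
      using internal_subset[of "P e"] set_subdiv_subset_VG[OF assms(1)] by blast
    moreover have "pv u = pv (\<phi> z)"
      using u(2) z(2) by simp
    ultimately have "u = \<phi> z"
      using inj_onD[OF drawing_inj[OF drawing_G]] \<open>\<phi> z \<in> VG\<close> by blast
    then show False
      using internal_not_branch[OF assms(1)] u(1) z(1) by blast
  qed
qed

text \<open>Internal subdivision vertices lie on one path only, and edge interiors avoid vertices.\<close>
lemma branch_curves_meet_in_edge_interior:
  assumes "e \<in> EH" "f \<in> EH" "e \<noteq> f" "t \<in> {0<..<1}" "s \<in> {0<..<1}"
    and "branch_curve e t = branch_curve f s"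
  shows "\<exists>a\<in>path_edges (P e). \<exists>\<tau>\<in>{0<..<1}. branch_curve e t = ce a \<tau>"
proof (rule ccontr)
  assume "\<not> ?thesis"
  then obtain u where u: "u \<in> internal (P e)" "branch_curve e t = pv u"
    using branch_curve_interior[OF assms(1,4)] by blast
  have "u \<in> VG"
    using u(1) internal_subset[of "P e"] set_subdiv_subset_VG[OF assms(1)] by blast
  from branch_curve_interior[OF assms(2,5)] show False
  proof (elim disjE bexE)
    fix b \<tau> assume b: "b \<in> path_edges (P f)" "\<tau> \<in> {0<..<1}" "branch_curve f s = ce b \<tau>"
    have "ce b \<tau> \<notin> pv ` VG"
      by (rule drawing_interior[OF drawing_G path_edge_in_EG[OF assms(2) b(1)] b(2)])
    moreover have "ce b \<tau> = pv u"
      using b(3) assms(6) u(2) by simp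
    moreover have "pv u \<in> pv ` VG"
      using \<open>u \<in> VG\<close> by (rule imageI)
    ultimately show False
      by (simp only: not_True_eq_False)
  next
    fix u' assume u': "u' \<in> internal (P f)" "branch_curve f s = pv u'"
    then have "u' \<in> VG"
      using internal_subset[of "P f"] set_subdiv_subset_VG[OF assms(2)] by blast
    moreover have "pv u = pv u'"
      using u(2) u'(2) assms(6) by simp
    ultimately have "u = u'"
      using inj_onD[OF drawing_inj[OF drawing_G]] \<open>u \<in> VG\<close> by blast
    then show False
      using internal_disjoint[OF assms(1-3)] u(1) u'(1) by blast
  qed
qed

lemma branch_curves_no_triple_point:
  assumes "e1 \<in> EH" "e2 \<in> EH" "e3 \<in> EH" "e1 \<noteq> e2" "e1 \<noteq> e3" "e2 \<noteq> e3"
    and "p \<in> branch_curve e1 ` {0<..<1}" "p \<in> branch_curve e2 ` {0<..<1}"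
    "p \<in> branch_curve e3 ` {0<..<1}"
  shows False
proof -
  obtain t1 t2 t3 where t: "t1 \<in> {0<..<1}" "t2 \<in> {0<..<1}" "t3 \<in> {0<..<1}"
    and p: "p = branch_curve e1 t1" "p = branch_curve e2 t2" "p = branch_curve e3 t3"
    using assms(7-9) by blast
  have "\<exists>a\<in>path_edges (P e1). \<exists>\<tau>\<in>{0<..<1}. p = ce a \<tau>"
    using branch_curves_meet_in_edge_interior[OF assms(1,2,4) t(1,2)] p by simp
  then obtain a1 where a1: "a1 \<in> path_edges (P e1)" "p \<in> ce a1 ` {0<..<1}"
    by blast
  have "\<exists>a\<in>path_edges (P e2). \<exists>\<tau>\<in>{0<..<1}. p = ce a \<tau>"
    using branch_curves_meet_in_edge_interior[OF assms(2,1) assms(4)[symmetric] t(2,1)] p by simp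
  then obtain a2 where a2: "a2 \<in> path_edges (P e2)" "p \<in> ce a2 ` {0<..<1}"
    by blast
  have "\<exists>a\<in>path_edges (P e3). \<exists>\<tau>\<in>{0<..<1}. p = ce a \<tau>"
    using branch_curves_meet_in_edge_interior[OF assms(3,1) assms(5)[symmetric] t(3,1)] p by simp
  then obtain a3 where a3: "a3 \<in> path_edges (P e3)" "p \<in> ce a3 ` {0<..<1}"
    by blast
  have "a1 \<noteq> a2"
    using path_edges_subdiv_disjoint[OF assms(1,2) a1(1)] a2(1) assms(4) by blast
  moreover have "a1 \<noteq> a3"
    using path_edges_subdiv_disjoint[OF assms(1,3) a1(1)] a3(1) assms(5) by blast
  moreover have "a2 \<noteq> a3"
    using path_edges_subdiv_disjoint[OF assms(2,3) a2(1)] a3(1) assms(6) by blast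
  ultimately show False
    by (rule drawing_no_triple_point[OF drawing_G path_edge_in_EG[OF assms(1) a1(1)]
        path_edge_in_EG[OF assms(2) a2(1)] path_edge_in_EG[OF assms(3) a3(1)] _ _ _ a1(2) a2(2) a3(2)])
qed

theorem drawing_branch_curves: "drawing X VH EH (pv \<circ> \<phi>) branch_curve"
proof (rule drawingI)
  show "(pv \<circ> \<phi>) ` VH \<subseteq> topspace X"
    using drawing_vertices[OF drawing_G] branch_in_VG by auto
  show "inj_on (pv \<circ> \<phi>) VH"
    using comp_inj_on[OF inj_branch inj_on_subset[OF drawing_inj[OF drawing_G] branch_in_VG]] .
next
  fix e assume "e \<in> EH"
  then obtain x y where "e = {x, y}" "hd (P e) = \<phi> x" "last (P e) = \<phi> y"
    using subdiv_ends by metis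
  then show "arc_in X (branch_curve e) \<and>
      (\<exists>v w. e = {v, w} \<and> branch_curve e 0 = (pv \<circ> \<phi>) v \<and> branch_curve e 1 = (pv \<circ> \<phi>) w)"
    using branch_curve[OF \<open>e \<in> EH\<close>] by auto
next
  fix e t assume "e \<in> EH" "t \<in> {0<..<1::real}"
  then show "branch_curve e t \<notin> (pv \<circ> \<phi>) ` VH"
    unfolding image_comp[symmetric] by (rule branch_curve_not_branch_vertex)
next
  fix e1 e2 e3 p
  assume "e1 \<in> EH" "e2 \<in> EH" "e3 \<in> EH" "e1 \<noteq> e2" "e1 \<noteq> e3" "e2 \<noteq> e3"
    "p \<in> branch_curve e1 ` {0<..<1}" "p \<in> branch_curve e2 ` {0<..<1}"
    "p \<in> branch_curve e3 ` {0<..<1}"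
  then show False
    by (rule branch_curves_no_triple_point)
qed

lemma branch_curves_crossing:
  assumes "e \<in> EH" "f \<in> EH" "independent_edges e f"
    and "branch_curve e ` {0..1} \<inter> branch_curve f ` {0..1} \<noteq> {}"
  obtains a b where "a \<in> path_edges (P e)" "b \<in> path_edges (P f)" "{a, b} \<in> crossing_pairs EG ce"
proof -
  obtain p where "p \<in> branch_curve e ` {0..1}" "p \<in> branch_curve f ` {0..1}"
    using assms(4) by blast
  then have "p \<in> (\<Union>a\<in>path_edges (P e). ce a ` {0..1})" "p \<in> (\<Union>b\<in>path_edges (P f). ce b ` {0..1})"
    using branch_curve(4)[OF assms(1)] branch_curve(4)[OF assms(2)] by blast+
  then obtain a b where a: "a \<in> path_edges (P e)" "p \<in> ce a ` {0..1}"
    and b: "b \<in> path_edges (P f)" "p \<in> ce b ` {0..1}"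
    by blast
  have "a \<inter> b = {}"
    by (rule path_edges_subdiv_independent[OF assms(1-3) a(1) b(1)])
  moreover have "ce a ` {0..1} \<inter> ce b ` {0..1} \<noteq> {}"
    using a(2) b(2) by blast
  ultimately have "{a, b} \<in> crossing_pairs EG ce"
    unfolding crossing_pairs_def independent_edges_def
    using path_edge_in_EG[OF assms(1) a(1)] path_edge_in_EG[OF assms(2) b(1)] by blast
  then show ?thesis
    using that a(1) b(1) by blast
qed

definition lifted_bearing :: "('a set \<times> 'a set) set \<Rightarrow> ('b set \<times> 'b set) set" where
  "lifted_bearing B = {(e, f). {e, f} \<in> crossing_pairs EH branch_curve \<and>
     (\<exists>a\<in>path_edges (P e). \<exists>b\<in>path_edges (P f). (a, b) \<in> B)}"

lemma bearing_lifted_bearing: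
  assumes "bearing EG ce B"
  shows "bearing EH branch_curve (lifted_bearing B)"
  unfolding bearing_def
proof (intro conjI allI impI)
  show "\<forall>(e, f)\<in>lifted_bearing B. {e, f} \<in> crossing_pairs EH branch_curve"
    unfolding lifted_bearing_def by blast
next
  fix e f assume ef: "{e, f} \<in> crossing_pairs EH branch_curve"
  then have fe: "{f, e} \<in> crossing_pairs EH branch_curve"
    by (simp add: insert_commute)
  obtain a b where ab: "a \<in> path_edges (P e)" "b \<in> path_edges (P f)"
    "{a, b} \<in> crossing_pairs EG ce"
    using branch_curves_crossing[OF crossing_pairsD[OF ef]] by blast
  then have "(a, b) \<in> B \<or> (b, a) \<in> B"
    using assms unfolding bearing_def by blast
  then show "(e, f) \<in> lifted_bearing B \<or> (f, e) \<in> lifted_bearing B"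
  proof
    assume "(a, b) \<in> B"
    then have "(e, f) \<in> lifted_bearing B"
      unfolding lifted_bearing_def using ef ab(1,2) by blast
    then show ?thesis ..
  next
    assume "(b, a) \<in> B"
    then have "(f, e) \<in> lifted_bearing B"
      unfolding lifted_bearing_def using fe ab(1,2) by blast
    then show ?thesis ..
  qed
qed

text \<open>A crossing partner \<open>f\<close> of \<open>e\<close> owes the crossing to a subdivision edge of \<open>f\<close>, which is
  covered by some \<open>u\<close> on the path of \<open>f\<close>; its owner is an end of \<open>f\<close>, hence not in \<open>e\<close>.\<close>
lemma B_cover_lifted_bearing:
  assumes "e \<in> EH" "\<And>a. a \<in> path_edges (P e) \<Longrightarrow> B_cover B a (C a)"
  shows "B_cover (lifted_bearing B) e (owner ` (\<Union>a\<in>path_edges (P e). C a) \<inter> VH - e)"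
  unfolding B_cover_def
proof (intro allI impI)
  fix f assume "(e, f) \<in> lifted_bearing B"
  then have ef: "{e, f} \<in> crossing_pairs EH branch_curve"
    and "\<exists>a\<in>path_edges (P e). \<exists>b\<in>path_edges (P f). (a, b) \<in> B"
    unfolding lifted_bearing_def by auto
  then obtain a b where ab: "a \<in> path_edges (P e)" "b \<in> path_edges (P f)" "(a, b) \<in> B"
    by blast
  have "f \<in> EH" "independent_edges e f"
    using crossing_pairsD[OF ef] by blast+
  obtain u where u: "u \<in> b" "u \<in> C a"
    using assms(2)[OF ab(1)] ab(3) unfolding B_cover_def by blast
  have "owner u \<in> f"
    using owner_mem[OF \<open>f \<in> EH\<close>] path_edge_subset_set[OF ab(2)] u(1) by blast
  moreover have "owner u \<in> VH" "owner u \<notin> e"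
    using \<open>owner u \<in> f\<close> edge_subset_VH[OF \<open>f \<in> EH\<close>] \<open>independent_edges e f\<close>
    unfolding independent_edges_def by blast+
  moreover have "owner u \<in> owner ` (\<Union>a\<in>path_edges (P e). C a)"
    using ab(1) u(2) by blast
  ultimately show "f \<inter> (owner ` (\<Union>a\<in>path_edges (P e). C a) \<inter> VH - e) \<noteq> {}"
    by blast
qed

theorem gap_cover_drawing_branch_curves:
  assumes "gap_cover_drawing k VG EG ce" "\<And>e. e \<in> EH \<Longrightarrow> length (P e) \<le> m + 1"
  shows "gap_cover_drawing (m * k) VH EH branch_curve"
proof -
  obtain B where B: "bearing EG ce B"
    and covers: "\<forall>a\<in>EG. \<exists>C. C \<subseteq> VG - a \<and> card C \<le> k \<and> B_cover B a C"
    using assms(1) unfolding gap_cover_drawing_def by blast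
  obtain C where C: "\<forall>a\<in>EG. C a \<subseteq> VG - a \<and> card (C a) \<le> k \<and> B_cover B a (C a)"
    using bchoice[OF covers] by blast
  have "\<exists>C'. C' \<subseteq> VH - e \<and> card C' \<le> m * k \<and> B_cover (lifted_bearing B) e C'" if "e \<in> EH" for e
  proof -
    let ?U = "\<Union>a\<in>path_edges (P e). C a"
    let ?C' = "owner ` ?U \<inter> VH - e"
    have "finite VG"
      using simple_G unfolding simple_graph_def by blast
    then have "finite (C a)" if "a \<in> path_edges (P e)" for a
      using C path_edge_in_EG[OF \<open>e \<in> EH\<close> that] finite_subset by blast
    then have "finite ?U"
      using finite_path_edges by blast
    have "card ?C' \<le> card (owner ` ?U)"
      by (rule card_mono) (use \<open>finite ?U\<close> in auto)
    also have "\<dots> \<le> card ?U"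
      by (rule card_image_le[OF \<open>finite ?U\<close>])
    also have "\<dots> \<le> (\<Sum>a\<in>path_edges (P e). card (C a))"
      by (rule card_UN_le[OF finite_path_edges])
    also have "\<dots> \<le> (\<Sum>a\<in>path_edges (P e). k)"
      by (rule sum_mono) (use C path_edge_in_EG[OF that] in blast)
    also have "\<dots> = card (path_edges (P e)) * k"
      by simp
    also have "\<dots> \<le> m * k"
      using card_path_edges[of "P e"] assms(2)[OF that] by (intro mult_right_mono) auto
    finally have "card ?C' \<le> m * k" .
    moreover have "B_cover (lifted_bearing B) e ?C'"
      by (rule B_cover_lifted_bearing[OF that]) (use C path_edge_in_EG[OF that] in blast)
    moreover have "?C' \<subseteq> VH - e"
      by blast
    ultimately show ?thesis
      by blast
  qed
  then show ?thesis
    unfolding gap_cover_drawing_def using bearing_lifted_bearing[OF B] by blast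
qed

end

lemma shallow_top_minorE:
  assumes "shallow_top_minor r VH EH VG EG" "simple_graph VG EG" "simple_graph VH EH"
  obtains \<phi> P where "topological_minor VG EG VH EH \<phi> P"
    "\<And>e. e \<in> EH \<Longrightarrow> length (P e) \<le> (2 * r + 1) + 1"
proof -
  from assms(1) obtain \<phi> P where inj: "inj_on \<phi> VH" and branch: "\<phi> ` VH \<subseteq> VG"
    and paths: "\<forall>e\<in>EH. is_path EG (P e) \<and> length (P e) \<le> 2 * r + 2 \<and>
        (\<exists>x y. e = {x, y} \<and> hd (P e) = \<phi> x \<and> last (P e) = \<phi> y) \<and> internal (P e) \<inter> \<phi> ` VH = {}"
    and disjoint: "\<forall>e\<in>EH. \<forall>f\<in>EH. e \<noteq> f \<longrightarrow> internal (P e) \<inter> internal (P f) = {}"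
    unfolding shallow_top_minor_def by (elim exE conjE) (rule that)
  have "topological_minor VG EG VH EH \<phi> P"
  proof
    fix e assume "e \<in> EH"
    then show "is_path EG (P e)"
      and "\<exists>x y. e = {x, y} \<and> hd (P e) = \<phi> x \<and> last (P e) = \<phi> y"
      and "internal (P e) \<inter> \<phi> ` VH = {}"
      using paths by blast+
  next
    fix e f assume "e \<in> EH" "f \<in> EH" "e \<noteq> f"
    then show "internal (P e) \<inter> internal (P f) = {}"
      using disjoint by blast
  qed (use assms(2,3) inj branch in auto)
  moreover have "\<And>e. e \<in> EH \<Longrightarrow> length (P e) \<le> (2 * r + 1) + 1"
    using paths by simp
  ultimately show ?thesis
    by (rule that)
qed

theorem corollary22:
  fixes g k r :: nat
    and VG :: "'a set" and EG :: "'a set set"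
    and VH :: "'b set" and EH :: "'b set set"
  assumes "simple_graph VG EG"
    and "simple_graph VH EH"
    and "gap_cover_planar g k VG EG"
    and "shallow_top_minor r VH EH VG EG"
  shows "gap_cover_planar g ((2 * r + 1) * k) VH EH"
proof -
  obtain c h pv ce where genus: "c + 2 * h \<le> g" and drawing: "drawing (surface c h) VG EG pv ce"
    and gap_cover: "gap_cover_drawing k VG EG ce"
    using assms(3) unfolding gap_cover_planar_def by blast
  obtain \<phi> P where minor: "topological_minor VG EG VH EH \<phi> P"
    and length: "\<And>e. e \<in> EH \<Longrightarrow> length (P e) \<le> (2 * r + 1) + 1"
    using shallow_top_minorE[OF assms(4,1,2)] by blast
  interpret topological_minor_drawing VG EG VH EH \<phi> P "surface c h" pv ce
    using minor Hausdorff_space_surface drawing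
    by (simp add: topological_minor_drawing_def topological_minor_drawing_axioms_def)
  have "drawing (surface c h) VH EH (pv \<circ> \<phi>) branch_curve"
    by (rule drawing_branch_curves)
  moreover have "gap_cover_drawing ((2 * r + 1) * k) VH EH branch_curve"
    by (rule gap_cover_drawing_branch_curves[OF gap_cover length])
  ultimately show ?thesis
    unfolding gap_cover_planar_def using genus by blast
qed

end
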